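(* Let $d\ge2$ and let the weights $(J_x)$ be i.i.d. with a good distribution and $\mathbb E|J_x|^{4+\delta}<\infty$ for some $\delta>0$. Let $M_n$ be the (a.s. unique) ground state of the monomer-dimer model on $\mathbb T_n^d$. Then there exist constants $C_1,C_2>0$ such that for all $n\ge 3$, \[C_1n^d\le \operatorname{Var}(H(M_n))\le C_2 n^d.\]
   Context: $\mathbb T_n^d=(\mathbb Z/n\mathbb Z)^d$ with nearest-neighbour edges; weights are attached to its vertices and edges. A matching is a set $M$ of vertices and edges such that every vertex either belongs to $M$ or is an endpoint of exactly one edge of $M$, but not both. $H(M)=\sum_{x\in M}J_x$; the ground state minimises $H$. A good distribution: values in $[\beta,\infty)$, $\beta\in\{-\infty\}\cup\mathbb R$, continuous density $p$ with $p>0$ on $(\beta,\infty)$, and for some $\alpha>1$, $\int_\beta^\infty(p(x-z)/p(x))^\alpha p(x)\,dx$ finite and continuous in $z>0$. *)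

theory Defs
  imports "HOL-Probability.Probability"
begin

text \<open>Vertices of the torus (Z/nZ)^d, represented as lists of length d with entries in {0..<n}.\<close>
definition torus_verts :: "nat \<Rightarrow> nat \<Rightarrow> nat list set" where
  "torus_verts n d = {x. length x = d \<and> (\<forall>i<d. x ! i < n)}"

definition torus_edges :: "nat \<Rightarrow> nat \<Rightarrow> nat list set set" where
  "torus_edges n d = {{x, x[i := (x ! i + 1) mod n]} | x i. x \<in> torus_verts n d \<and> i < d}"

datatype site = Vtx "nat list" | Edg "nat list set"

definition torus_sites :: "nat \<Rightarrow> nat \<Rightarrow> site set" where
  "torus_sites n d = Vtx ` torus_verts n d \<union> Edg ` torus_edges n d"

definition is_matching :: "nat \<Rightarrow> nat \<Rightarrow> site set \<Rightarrow> bool" where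
  "is_matching n d M \<longleftrightarrow> M \<subseteq> torus_sites n d \<and>
     (\<forall>v\<in>torus_verts n d.
        (Vtx v \<in> M \<and> card {e. Edg e \<in> M \<and> v \<in> e} = 0) \<or>
        (Vtx v \<notin> M \<and> card {e. Edg e \<in> M \<and> v \<in> e} = 1))"

definition energy :: "(site \<Rightarrow> real) \<Rightarrow> site set \<Rightarrow> real" where
  "energy J M = (\<Sum>s\<in>M. J s)"

definition ground_energy :: "nat \<Rightarrow> nat \<Rightarrow> (site \<Rightarrow> real) \<Rightarrow> real" where
  "ground_energy n d J = Min {energy J M | M. is_matching n d M}"

definition good_density :: "(real \<Rightarrow> real) \<Rightarrow> ereal \<Rightarrow> bool" where
  "good_density p \<beta> \<longleftrightarrow>
     \<beta> \<noteq> \<infinity> \<and>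
     p \<in> borel_measurable borel \<and>
     prob_space (density lborel (\<lambda>x. ennreal (p x))) \<and>
     (\<forall>x. p x \<ge> 0) \<and>
     (\<forall>x. ereal x < \<beta> \<longrightarrow> p x = 0) \<and>
     continuous_on {x. \<beta> < ereal x} p \<and>
     (\<forall>x. \<beta> < ereal x \<longrightarrow> p x > 0) \<and>
     (\<exists>\<alpha>>1.
        (\<forall>z>0. set_integrable lborel {x. \<beta> < ereal x}
                 (\<lambda>x. (p (x - z) / p x) powr \<alpha> * p x)) \<and>
        continuous_on {0<..}
          (\<lambda>z. set_lebesgue_integral lborel {x. \<beta> < ereal x}
                 (\<lambda>x. (p (x - z) / p x) powr \<alpha> * p x)))"

definition weight_dist :: "(real \<Rightarrow> real) \<Rightarrow> real measure" where
  "weight_dist p = density lborel (\<lambda>x. ennreal (p x))"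

definition weight_field :: "(real \<Rightarrow> real) \<Rightarrow> nat \<Rightarrow> nat \<Rightarrow> (site \<Rightarrow> real) measure" where
  "weight_field p n d = PiM (torus_sites n d) (\<lambda>_. weight_dist p)"

definition variance_of :: "'a measure \<Rightarrow> ('a \<Rightarrow> real) \<Rightarrow> real" where
  "variance_of M X = (\<integral>\<omega>. (X \<omega> - (\<integral>\<omega>'. X \<omega>' \<partial>M))\<^sup>2 \<partial>M)"

end

theory Submission
  imports Defs
begin

text \<open>
  Upper bound: the ground-state energy is 1-Lipschitz in every single weight, so the
  Efron-Stein inequality bounds its variance by the number of sites, at most (d+1) n^d,
  times the variance of one weight.

  Lower bound: for independent coordinates, Var f dominates the sum over all sites s of the
  variances of the one-coordinate conditional expectations t \<mapsto> E[f | J_s = t]. Fix a vertex v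
  and levels c+1 < c+2 above the lower end of the support. If q bounds from below the
  probability that a single weight is heavy, resp. light, then with probability at least
  q^(4d) all (at most 2d) edges at v are heavy and all (at most 2d) neighbours of v are
  light; then every ground state for J_v = c+2 uses v as a monomer, so lowering J_v to c+1
  lowers the ground-state energy by 1. Hence t \<mapsto> E[H | J_v = t] is monotone, 1-Lipschitz
  and increases by at least q^(4d) on [c+1, c+2], which bounds its variance from below
  independently of n. Summing over the n^d vertices gives the lower bound.
\<close>

section \<open>The discrete torus\<close>

lemma torus_verts_eq_lists: "torus_verts n d = {xs. set xs \<subseteq> {..<n} \<and> length xs = d}"
  unfolding torus_verts_def by (auto simp: in_set_conv_nth subset_iff)

lemma finite_torus_verts: "finite (torus_verts n d)"
  unfolding torus_verts_eq_lists by (rule finite_lists_length_eq) simp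

lemma card_torus_verts: "card (torus_verts n d) = n ^ d"
  unfolding torus_verts_eq_lists by (subst card_lists_length_eq) simp_all

definition torus_succ :: "nat \<Rightarrow> nat list \<Rightarrow> nat \<Rightarrow> nat list" where
  "torus_succ n x i = x[i := (x ! i + 1) mod n]"

definition torus_pred :: "nat \<Rightarrow> nat list \<Rightarrow> nat \<Rightarrow> nat list" where
  "torus_pred n x i = x[i := (x ! i + n - 1) mod n]"

lemma torus_edges_eq_image:
  "torus_edges n d = (\<lambda>(x, i). {x, torus_succ n x i}) ` (torus_verts n d \<times> {..<d})"
  unfolding torus_edges_def torus_succ_def by auto

lemma finite_torus_edges: "finite (torus_edges n d)"
  unfolding torus_edges_eq_image using finite_torus_verts by simp

lemma card_torus_edges_le: "card (torus_edges n d) \<le> d * n ^ d"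
proof -
  have "card (torus_edges n d) \<le> card (torus_verts n d \<times> {..<d})"
    unfolding torus_edges_eq_image by (rule card_image_le) (simp add: finite_torus_verts)
  also have "\<dots> = d * n ^ d" by (simp add: card_cartesian_product card_torus_verts)
  finally show ?thesis .
qed

lemma finite_torus_sites: "finite (torus_sites n d)"
  unfolding torus_sites_def using finite_torus_verts finite_torus_edges by simp

lemma card_torus_sites_le: "card (torus_sites n d) \<le> (d + 1) * n ^ d"
proof -
  have "card (torus_sites n d) \<le> card (Vtx ` torus_verts n d) + card (Edg ` torus_edges n d)"
    unfolding torus_sites_def by (rule card_Un_le)
  also have "\<dots> \<le> card (torus_verts n d) + card (torus_edges n d)"
    by (intro add_mono card_image_le finite_torus_verts finite_torus_edges)
  also have "\<dots> \<le> n ^ d + d * n ^ d" using card_torus_edges_le card_torus_verts by simp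
  finally show ?thesis by simp
qed

lemma torus_succ_in_verts:
  assumes "x \<in> torus_verts n d" "i < d"
  shows "torus_succ n x i \<in> torus_verts n d"
proof -
  have len: "length x = d" and bound: "\<forall>j<d. x ! j < n"
    using assms(1) unfolding torus_verts_def by auto
  then have "n > 0" using assms(2) by fastforce
  have "torus_succ n x i ! j < n" if "j < d" for j
    using bound len that \<open>n > 0\<close> assms(2) by (cases "j = i") (simp_all add: torus_succ_def)
  moreover have "length (torus_succ n x i) = d" using len by (simp add: torus_succ_def)
  ultimately show ?thesis unfolding torus_verts_def by blast
qed

lemma torus_succ_neq:
  assumes "x \<in> torus_verts n d" "i < d" "n \<ge> 2"
  shows "torus_succ n x i \<noteq> x"
proof
  assume eq: "torus_succ n x i = x"
  have len: "length x = d" and xi: "x ! i < n" using assms(1,2) unfolding torus_verts_def by auto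
  have "(x ! i + 1) mod n = x ! i"
    using eq len assms(2) by (metis nth_list_update_eq torus_succ_def)
  moreover have "(x ! i + 1) mod n \<noteq> x ! i"
  proof (cases "x ! i + 1 < n")
    case False
    then have "x ! i + 1 = n" using xi by linarith
    then show ?thesis using assms(3) by simp
  qed simp
  ultimately show False by contradiction
qed

lemma torus_pred_succ:
  assumes "x \<in> torus_verts n d" "i < d"
  shows "torus_pred n (torus_succ n x i) i = x"
proof -
  have xi: "x ! i < n" and len: "length x = d" using assms unfolding torus_verts_def by auto
  then have n: "n \<ge> 1" by simp
  have "((x ! i + 1) mod n + n - 1) mod n = ((x ! i + 1) mod n + (n - 1)) mod n" using n by simp
  also have "\<dots> = (x ! i + 1 + (n - 1)) mod n" by (simp add: mod_add_left_eq)
  also have "x ! i + 1 + (n - 1) = x ! i + n" using n by simp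
  also have "(x ! i + n) mod n = x ! i" using xi by simp
  finally have "((x ! i + 1) mod n + n - 1) mod n = x ! i" .
  then show ?thesis using assms(2) len unfolding torus_pred_def torus_succ_def by simp
qed

lemma torus_edgeE:
  assumes "e \<in> torus_edges n d"
  obtains x i where "x \<in> torus_verts n d" "i < d" "e = {x, torus_succ n x i}"
  using assms unfolding torus_edges_eq_image by auto

lemma torus_edge_subset_verts: "e \<in> torus_edges n d \<Longrightarrow> e \<subseteq> torus_verts n d"
  by (elim torus_edgeE) (auto intro: torus_succ_in_verts)

lemma torus_edge_other_end:
  assumes "e \<in> torus_edges n d" "v \<in> e" "n \<ge> 2"
  obtains w where "w \<noteq> v" "e = {v, w}"
proof -
  obtain x i where x: "x \<in> torus_verts n d" "i < d" and e: "e = {x, torus_succ n x i}"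
    using assms(1) by (rule torus_edgeE)
  have ne: "torus_succ n x i \<noteq> x" using torus_succ_neq[OF x assms(3)] .
  show ?thesis
  proof (cases "v = x")
    case True
    then show ?thesis using that[of "torus_succ n x i"] ne e by simp
  next
    case False
    then show ?thesis using that[of x] ne e assms(2) by (auto simp: insert_commute)
  qed
qed

definition incident_edges :: "nat \<Rightarrow> nat \<Rightarrow> nat list \<Rightarrow> nat list set set" where
  "incident_edges n d v = {e \<in> torus_edges n d. v \<in> e}"

definition torus_neighbours :: "nat \<Rightarrow> nat \<Rightarrow> nat list \<Rightarrow> nat list set" where
  "torus_neighbours n d v = \<Union>(incident_edges n d v) - {v}"

lemma incident_edges_subset:
  assumes "v \<in> torus_verts n d"
  shows "incident_edges n d v \<subseteq>
    (\<lambda>i. {v, torus_succ n v i}) ` {..<d} \<union> (\<lambda>i. {torus_pred n v i, v}) ` {..<d}"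
proof
  fix e assume "e \<in> incident_edges n d v"
  then obtain x i where x: "x \<in> torus_verts n d" "i < d" and e: "e = {x, torus_succ n x i}"
    and v: "v \<in> e"
    unfolding incident_edges_def torus_edges_eq_image by auto
  show "e \<in> (\<lambda>i. {v, torus_succ n v i}) ` {..<d} \<union> (\<lambda>i. {torus_pred n v i, v}) ` {..<d}"
  proof (cases "v = x")
    case False
    then have "v = torus_succ n x i" using v e by auto
    moreover from this have "x = torus_pred n v i" using torus_pred_succ[OF x] by simp
    ultimately show ?thesis using e x by auto
  qed (use e x in auto)
qed

lemma card_incident_edges_le:
  assumes "v \<in> torus_verts n d"
  shows "card (incident_edges n d v) \<le> 2 * d"
proof -
  have "card (incident_edges n d v) \<le>
      card ((\<lambda>i. {v, torus_succ n v i}) ` {..<d} \<union> (\<lambda>i. {torus_pred n v i, v}) ` {..<d})"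
    by (rule card_mono[OF _ incident_edges_subset[OF assms]]) simp
  also have "\<dots> \<le> d + d"
    by (intro card_Un_le[THEN order_trans] add_mono card_image_le[THEN order_trans]) auto
  finally show ?thesis by simp
qed

lemma card_torus_neighbours_le:
  assumes "v \<in> torus_verts n d"
  shows "card (torus_neighbours n d v) \<le> 2 * d"
proof -
  have "torus_neighbours n d v \<subseteq> torus_succ n v ` {..<d} \<union> torus_pred n v ` {..<d}"
    using incident_edges_subset[OF assms] unfolding torus_neighbours_def by blast
  then have "card (torus_neighbours n d v) \<le> card (torus_succ n v ` {..<d} \<union> torus_pred n v ` {..<d})"
    by (rule card_mono[rotated]) simp
  also have "\<dots> \<le> d + d"
    by (intro card_Un_le[THEN order_trans] add_mono card_image_le[THEN order_trans]) auto
  finally show ?thesis by simp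
qed

lemma finite_torus_neighbours: "finite (torus_neighbours n d v)"
proof (rule finite_subset[OF _ finite_torus_verts])
  show "torus_neighbours n d v \<subseteq> torus_verts n d"
    unfolding torus_neighbours_def incident_edges_def using torus_edge_subset_verts by blast
qed

lemma finite_incident_edges: "finite (incident_edges n d v)"
  unfolding incident_edges_def using finite_torus_edges by simp

section \<open>Matchings and the ground-state energy\<close>

definition dimers_at :: "site set \<Rightarrow> nat list \<Rightarrow> nat list set set" where
  "dimers_at M u = {e. Edg e \<in> M \<and> u \<in> e}"

lemma is_matching_iff_dimers_at:
  "is_matching n d M \<longleftrightarrow> M \<subseteq> torus_sites n d \<and>
     (\<forall>u\<in>torus_verts n d. (Vtx u \<in> M \<and> card (dimers_at M u) = 0) \<or>
                           (Vtx u \<notin> M \<and> card (dimers_at M u) = 1))"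
  unfolding is_matching_def dimers_at_def ..

lemma is_matching_subset_sites: "is_matching n d M \<Longrightarrow> M \<subseteq> torus_sites n d"
  unfolding is_matching_def by blast

lemma finite_matching: "is_matching n d M \<Longrightarrow> finite M"
  by (rule finite_subset[OF is_matching_subset_sites finite_torus_sites])

lemma finite_matchings: "finite {M. is_matching n d M}"
  by (rule finite_subset[of _ "Pow (torus_sites n d)"]) (auto dest: is_matching_subset_sites simp: finite_torus_sites)

lemma is_matching_all_monomers: "is_matching n d (Vtx ` torus_verts n d)"
proof -
  have "dimers_at (Vtx ` torus_verts n d) v = {}" for v by (auto simp: dimers_at_def)
  then show ?thesis unfolding is_matching_iff_dimers_at torus_sites_def by auto
qed

lemma finite_dimers_at: "M \<subseteq> torus_sites n d \<Longrightarrow> finite (dimers_at M u)"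
  by (rule finite_subset[OF _ finite_torus_edges]) (auto simp: dimers_at_def torus_sites_def)

lemma dimers_at_matching_edge:
  assumes "is_matching n d M" "u \<in> torus_verts n d" "Edg e \<in> M" "u \<in> e"
  shows "Vtx u \<notin> M" "dimers_at M u = {e}"
proof -
  have "e \<in> dimers_at M u" using assms unfolding dimers_at_def by simp
  moreover have "finite (dimers_at M u)" by (rule finite_dimers_at[OF is_matching_subset_sites[OF assms(1)]])
  ultimately have "card (dimers_at M u) \<noteq> 0" by auto
  then have "Vtx u \<notin> M \<and> card (dimers_at M u) = 1"
    using assms(1,2) unfolding is_matching_iff_dimers_at by auto
  then show "Vtx u \<notin> M" "dimers_at M u = {e}"
    using \<open>e \<in> dimers_at M u\<close> by (auto simp: card_1_singleton_iff)
qed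

lemma ground_energy_eq_Min: "ground_energy n d J = Min ((\<lambda>M. energy J M) ` {M. is_matching n d M})"
  unfolding ground_energy_def by (simp add: setcompr_eq_image)

lemma ground_energy_le: "is_matching n d M \<Longrightarrow> ground_energy n d J \<le> energy J M"
  unfolding ground_energy_eq_Min by (rule Min_le) (simp_all add: finite_matchings)

lemma ground_energy_attained:
  obtains M where "is_matching n d M" "ground_energy n d J = energy J M"
proof -
  have "ground_energy n d J \<in> (\<lambda>M. energy J M) ` {M. is_matching n d M}"
    unfolding ground_energy_eq_Min
    by (rule Min_in) (use finite_matchings is_matching_all_monomers in blast)+
  then show ?thesis using that by blast
qed

lemma energy_fun_upd:
  assumes "finite M"
  shows "energy (J(s := t)) M = energy J M + (if s \<in> M then t - J s else 0)"
proof (cases "s \<in> M")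
  case True
  have "sum (J(s := t)) (M - {s}) = sum J (M - {s})" by (intro sum.cong) auto
  then have "sum (J(s := t)) M = t + sum J (M - {s})"
    using sum.remove[OF assms True, of "J(s := t)"] by simp
  moreover have "sum J M = J s + sum J (M - {s})" using sum.remove[OF assms True] .
  ultimately show ?thesis unfolding energy_def using True by simp
next
  case False
  then have "sum (J(s := t)) M = sum J M" by (intro sum.cong) auto
  then show ?thesis unfolding energy_def using False by simp
qed

lemma ground_energy_fun_upd_le: "ground_energy n d (J(s := t)) \<le> ground_energy n d J + \<bar>t - J s\<bar>"
proof -
  obtain M where M: "is_matching n d M" "ground_energy n d J = energy J M"
    by (rule ground_energy_attained)
  have "ground_energy n d (J(s := t)) \<le> energy (J(s := t)) M" by (rule ground_energy_le[OF M(1)])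
  also have "\<dots> = energy J M + (if s \<in> M then t - J s else 0)"
    by (rule energy_fun_upd[OF finite_matching[OF M(1)]])
  also have "\<dots> \<le> ground_energy n d J + \<bar>t - J s\<bar>" using M(2) by auto
  finally show ?thesis .
qed

lemma ground_energy_fun_upd_lipschitz:
  "\<bar>ground_energy n d J - ground_energy n d (J(s := t))\<bar> \<le> \<bar>J s - t\<bar>"
  using ground_energy_fun_upd_le[of n d J s t] ground_energy_fun_upd_le[of n d "J(s := t)" s "J s"]
  by simp

lemma ground_energy_fun_upd_mono:
  assumes "t1 \<le> t2"
  shows "ground_energy n d (J(s := t1)) \<le> ground_energy n d (J(s := t2))"
proof -
  obtain M where M: "is_matching n d M" "ground_energy n d (J(s := t2)) = energy (J(s := t2)) M"
    by (rule ground_energy_attained)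
  have "ground_energy n d (J(s := t1)) \<le> energy ((J(s := t2))(s := t1)) M"
    using ground_energy_le[OF M(1)] by simp
  also have "\<dots> = energy (J(s := t2)) M + (if s \<in> M then t1 - t2 else 0)"
    using energy_fun_upd[OF finite_matching[OF M(1)]] by simp
  also have "\<dots> \<le> ground_energy n d (J(s := t2))" using M(2) assms by auto
  finally show ?thesis .
qed

lemma matching_split_dimer:
  assumes "n \<ge> 2" and M: "is_matching n d M" and v: "v \<in> torus_verts n d" and "Vtx v \<notin> M"
  obtains e w where "e \<in> incident_edges n d v" "w \<in> e" "w \<noteq> v"
    "is_matching n d (insert (Vtx v) (insert (Vtx w) (M - {Edg e})))"
    "energy J (insert (Vtx v) (insert (Vtx w) (M - {Edg e}))) =
       energy J M - J (Edg e) + J (Vtx v) + J (Vtx w)"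
proof -
  have Ms: "M \<subseteq> torus_sites n d" using is_matching_subset_sites[OF M] .
  have "card (dimers_at M v) = 1" using M v \<open>Vtx v \<notin> M\<close> unfolding is_matching_iff_dimers_at by auto
  then obtain e where dv: "dimers_at M v = {e}" using card_1_singletonE by blast
  then have eM: "Edg e \<in> M" and ve: "v \<in> e" unfolding dimers_at_def by auto
  have eE: "e \<in> torus_edges n d" using Ms eM unfolding torus_sites_def by auto
  obtain w where wv: "w \<noteq> v" and e: "e = {v, w}" using torus_edge_other_end[OF eE ve assms(1)] .
  have we: "w \<in> e" using e by simp
  have wV: "w \<in> torus_verts n d" using torus_edge_subset_verts[OF eE] we by blast
  have nw: "Vtx w \<notin> M" and dw: "dimers_at M w = {e}" using dimers_at_matching_edge[OF M wV eM we] by auto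
  let ?M' = "insert (Vtx v) (insert (Vtx w) (M - {Edg e}))"
  have dimers': "dimers_at ?M' u = dimers_at M u - {e}" for u unfolding dimers_at_def by auto
  have "is_matching n d ?M'"
    unfolding is_matching_iff_dimers_at
  proof (intro conjI ballI)
    show "?M' \<subseteq> torus_sites n d" using Ms v wV unfolding torus_sites_def by auto
    fix u assume u: "u \<in> torus_verts n d"
    show "(Vtx u \<in> ?M' \<and> card (dimers_at ?M' u) = 0) \<or> (Vtx u \<notin> ?M' \<and> card (dimers_at ?M' u) = 1)"
    proof (cases "u = v \<or> u = w")
      case True
      then show ?thesis using dv dw dimers' by auto
    next
      case False
      then have "dimers_at ?M' u = dimers_at M u" unfolding dimers' using e by (auto simp: dimers_at_def)
      moreover have "Vtx u \<in> ?M' \<longleftrightarrow> Vtx u \<in> M" using False by auto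
      ultimately show ?thesis using M u unfolding is_matching_iff_dimers_at by simp
    qed
  qed
  moreover have "energy J ?M' = energy J M - J (Edg e) + J (Vtx v) + J (Vtx w)"
    using finite_matching[OF M] \<open>Vtx v \<notin> M\<close> nw wv eM
    by (simp add: energy_def sum_diff1)
  moreover have "e \<in> incident_edges n d v" using eE ve unfolding incident_edges_def by simp
  ultimately show ?thesis using that we wv by blast
qed

text \<open>Every ground state for J_v = b has a monomer at v: splitting the dimer covering v would
  lower the energy.\<close>

lemma ground_energy_fun_upd_forced_monomer:
  assumes "n \<ge> 2" "v \<in> torus_verts n d"
    and heavy: "\<And>e w. e \<in> incident_edges n d v \<Longrightarrow> w \<in> e \<Longrightarrow> w \<noteq> v \<Longrightarrow> b + J (Vtx w) < J (Edg e)"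
  shows "ground_energy n d (J(Vtx v := a)) + (b - a) \<le> ground_energy n d (J(Vtx v := b))"
proof -
  let ?J = "J(Vtx v := b)"
  obtain M where M: "is_matching n d M" "ground_energy n d ?J = energy ?J M"
    by (rule ground_energy_attained)
  have "Vtx v \<in> M"
  proof (rule ccontr)
    assume "Vtx v \<notin> M"
    then obtain e w where e: "e \<in> incident_edges n d v" "w \<in> e" "w \<noteq> v"
      and split: "is_matching n d (insert (Vtx v) (insert (Vtx w) (M - {Edg e})))"
        "energy ?J (insert (Vtx v) (insert (Vtx w) (M - {Edg e}))) =
           energy ?J M - ?J (Edg e) + ?J (Vtx v) + ?J (Vtx w)"
      by (rule matching_split_dimer[OF assms(1) M(1) assms(2)])
    have "ground_energy n d ?J \<le> energy ?J M - ?J (Edg e) + ?J (Vtx v) + ?J (Vtx w)"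
      using ground_energy_le[OF split(1), of ?J] split(2) by linarith
    then show False using heavy[OF e] e(3) M(2) by simp
  qed
  have "ground_energy n d (J(Vtx v := a)) \<le> energy (?J(Vtx v := a)) M"
    using ground_energy_le[OF M(1)] by simp
  also have "\<dots> = ground_energy n d ?J + (a - b)"
    using energy_fun_upd[OF finite_matching[OF M(1)]] \<open>Vtx v \<in> M\<close> M(2) by simp
  finally show ?thesis by simp
qed

text \<open>For weights in this box, v is a monomer in every ground state once J_v = b.\<close>

definition isolating_ranges :: "nat \<Rightarrow> nat \<Rightarrow> nat list \<Rightarrow> real \<Rightarrow> real \<Rightarrow> site \<Rightarrow> real set" where
  "isolating_ranges n d v b w s =
     (if s \<in> Edg ` incident_edges n d v then {b + w<..}
      else if s \<in> Vtx ` torus_neighbours n d v then {..<w} else UNIV)"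

lemma ground_energy_jump_isolating:
  assumes "n \<ge> 2" "v \<in> torus_verts n d" "J \<in> PiE (torus_sites n d) (isolating_ranges n d v b w)"
  shows "ground_energy n d (J(Vtx v := a)) + (b - a) \<le> ground_energy n d (J(Vtx v := b))"
proof (rule ground_energy_fun_upd_forced_monomer[OF assms(1,2)])
  fix e u assume e: "e \<in> incident_edges n d v" and u: "u \<in> e" "u \<noteq> v"
  have "e \<in> torus_edges n d" using e unfolding incident_edges_def by simp
  then have sites: "Edg e \<in> torus_sites n d" "Vtx u \<in> torus_sites n d"
    using torus_edge_subset_verts u(1) unfolding torus_sites_def by blast+
  have "u \<in> torus_neighbours n d v" using e u unfolding torus_neighbours_def by blast
  then have "J (Vtx u) < w" using PiE_mem[OF assms(3) sites(2)] by (simp add: isolating_ranges_def image_iff)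
  moreover have "b + w < J (Edg e)" using PiE_mem[OF assms(3) sites(1)] e by (simp add: isolating_ranges_def)
  ultimately show "b + J (Vtx u) < J (Edg e)" by simp
qed

section \<open>Variance\<close>

lemma variance_of_eq:
  fixes f :: "'a \<Rightarrow> real"
  assumes "prob_space M" "integrable M f" "integrable M (\<lambda>x. (f x)\<^sup>2)"
  shows "variance_of M f = (\<integral>x. (f x)\<^sup>2 \<partial>M) - (\<integral>x. f x \<partial>M)\<^sup>2"
  unfolding variance_of_def using prob_space.variance_eq[OF assms] .

lemma variance_of_nonneg: "variance_of M f \<ge> 0"
  unfolding variance_of_def by (rule integral_nonneg_AE) auto

lemma variance_of_le_integral_sq_diff:
  fixes f :: "'a \<Rightarrow> real"
  assumes "prob_space M" "integrable M f" "integrable M (\<lambda>x. (f x)\<^sup>2)"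
  shows "variance_of M f \<le> (\<integral>x. (f x - c)\<^sup>2 \<partial>M)"
proof -
  interpret prob_space M by fact
  let ?m = "\<integral>x. f x \<partial>M"
  have "(\<lambda>x. (f x - c)\<^sup>2) = (\<lambda>x. (f x)\<^sup>2 - 2 * c * f x + c\<^sup>2)"
    by (auto simp: power2_eq_square algebra_simps)
  then have "(\<integral>x. (f x - c)\<^sup>2 \<partial>M) = (\<integral>x. (f x)\<^sup>2 \<partial>M) - 2 * c * ?m + c\<^sup>2"
    using assms by (simp add: prob_space)
  moreover have "0 \<le> (?m - c)\<^sup>2" by simp
  ultimately show ?thesis
    using variance_of_eq[OF assms] by (simp add: power2_eq_square algebra_simps)
qed

lemma square_integral_le_integral_square:
  fixes f :: "'a \<Rightarrow> real"
  assumes "prob_space M" "integrable M f" "integrable M (\<lambda>x. (f x)\<^sup>2)"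
  shows "(\<integral>x. f x \<partial>M)\<^sup>2 \<le> (\<integral>x. (f x)\<^sup>2 \<partial>M)"
  using variance_of_eq[OF assms] variance_of_nonneg[of M f] by simp

lemma integrable_square_diff:
  fixes u v :: "'a \<Rightarrow> real"
  assumes "u \<in> borel_measurable M" "v \<in> borel_measurable M"
    "integrable M (\<lambda>x. (u x)\<^sup>2)" "integrable M (\<lambda>x. (v x)\<^sup>2)"
  shows "integrable M (\<lambda>x. (u x - v x)\<^sup>2)"
proof (rule Bochner_Integration.integrable_bound[of _ "\<lambda>x. 2 * (u x)\<^sup>2 + 2 * (v x)\<^sup>2"])
  show "integrable M (\<lambda>x. 2 * (u x)\<^sup>2 + 2 * (v x)\<^sup>2)"
    using assms by (intro Bochner_Integration.integrable_add integrable_mult_right) auto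
  show "(\<lambda>x. (u x - v x)\<^sup>2) \<in> borel_measurable M" using assms by measurable
  have "(u x - v x)\<^sup>2 \<le> 2 * (u x)\<^sup>2 + 2 * (v x)\<^sup>2" for x
    using zero_le_power2[of "u x + v x"] by (simp add: power2_eq_square algebra_simps)
  then show "AE x in M. norm ((u x - v x)\<^sup>2) \<le> norm (2 * (u x)\<^sup>2 + 2 * (v x)\<^sup>2)" by simp
qed

lemma abs_integral_diff_le:
  fixes u v :: "'a \<Rightarrow> real"
  assumes "prob_space M" "integrable M u" "integrable M v"
    "\<And>x. x \<in> space M \<Longrightarrow> \<bar>u x - v x\<bar> \<le> c"
  shows "\<bar>(\<integral>x. u x \<partial>M) - (\<integral>x. v x \<partial>M)\<bar> \<le> c"
proof -
  interpret prob_space M by fact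
  have "(\<integral>x. u x \<partial>M) - (\<integral>x. v x \<partial>M) = (\<integral>x. u x - v x \<partial>M)"
    using assms by simp
  moreover have "(\<integral>x. u x - v x \<partial>M) \<le> (\<integral>x. c \<partial>M)"
    using assms by (intro integral_mono) (auto simp: abs_le_iff)
  moreover have "(\<integral>x. -c \<partial>M) \<le> (\<integral>x. u x - v x \<partial>M)"
  proof (rule integral_mono)
    fix x assume "x \<in> space M"
    then show "-c \<le> u x - v x" using assms(4)[of x] by linarith
  qed (use assms in auto)
  ultimately show ?thesis by (simp add: prob_space)
qed

lemma lipschitz1_real_iff:
  "1-lipschitz_on UNIV (\<phi> :: real \<Rightarrow> real) \<longleftrightarrow> (\<forall>s t. \<bar>\<phi> s - \<phi> t\<bar> \<le> \<bar>s - t\<bar>)"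
  unfolding lipschitz_on_def dist_real_def by simp

lemma lipschitz1_diff_const: "1-lipschitz_on UNIV (\<phi> :: real \<Rightarrow> real) \<Longrightarrow> 1-lipschitz_on UNIV (\<lambda>t. \<phi> t - c)"
  unfolding lipschitz1_real_iff by simp

lemma borel_measurable_lipschitz1:
  "1-lipschitz_on UNIV (\<phi> :: real \<Rightarrow> real) \<Longrightarrow> \<phi> \<in> borel_measurable borel"
  by (intro borel_measurable_continuous_onI lipschitz_on_continuous_on)

section \<open>Functions of i.i.d. square-integrable weights\<close>

locale square_integrable_law =
  fixes \<mu> :: "real measure"
  assumes prob_space_law: "prob_space \<mu>" and sets_law: "sets \<mu> = sets borel"
    and integrable_square: "integrable \<mu> (\<lambda>t. t\<^sup>2)"
begin

lemma space_law[simp]: "space \<mu> = UNIV"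
  using sets_eq_imp_space_eq[OF sets_law] by simp

lemma borel_measurable_law: "f \<in> borel_measurable borel \<Longrightarrow> f \<in> borel_measurable \<mu>"
  using measurable_cong_sets[OF sets_law refl] by blast

lemma finite_measure_law: "finite_measure \<mu>"
  using prob_space_law by (rule prob_space.finite_measure)

lemma integrable_id: "integrable \<mu> (\<lambda>t. t)"
proof (rule Bochner_Integration.integrable_bound[of _ "\<lambda>t. 1 + t\<^sup>2"])
  show "integrable \<mu> (\<lambda>t. 1 + t\<^sup>2)"
    using integrable_square finite_measure_law
    by (intro Bochner_Integration.integrable_add) (auto simp: finite_measure.integrable_const)
  show "(\<lambda>t. t) \<in> borel_measurable \<mu>" by (rule borel_measurable_law) simp
  have "\<bar>x\<bar> \<le> 1 + x\<^sup>2" for x :: real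
  proof (cases "\<bar>x\<bar> \<le> 1")
    case False
    then have "1 * \<bar>x\<bar> \<le> \<bar>x\<bar> * \<bar>x\<bar>" by (intro mult_right_mono) auto
    then show ?thesis by (simp add: power2_eq_square)
  qed (use zero_le_power2[of x] in linarith)
  then show "AE x in \<mu>. norm x \<le> norm (1 + x\<^sup>2)" by simp
qed

lemma integrable_lipschitz1:
  fixes \<phi> :: "real \<Rightarrow> real"
  assumes "1-lipschitz_on UNIV \<phi>"
  shows "integrable \<mu> \<phi>" "integrable \<mu> (\<lambda>t. (\<phi> t)\<^sup>2)"
proof -
  have m: "\<phi> \<in> borel_measurable \<mu>" using borel_measurable_law borel_measurable_lipschitz1 assms by blast
  have b: "\<bar>\<phi> t\<bar> \<le> \<bar>\<phi> 0\<bar> + \<bar>t\<bar>" for t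
    using assms unfolding lipschitz1_real_iff by (smt (verit) diff_zero)
  show "integrable \<mu> \<phi>"
  proof (rule Bochner_Integration.integrable_bound[of _ "\<lambda>t. \<bar>\<phi> 0\<bar> + \<bar>t\<bar>"])
    show "integrable \<mu> (\<lambda>t. \<bar>\<phi> 0\<bar> + \<bar>t\<bar>)" using integrable_id finite_measure_law
      by (intro Bochner_Integration.integrable_add integrable_abs) (auto simp: finite_measure.integrable_const)
  qed (use m b in auto)
  show "integrable \<mu> (\<lambda>t. (\<phi> t)\<^sup>2)"
  proof (rule Bochner_Integration.integrable_bound[of _ "\<lambda>t. 2 * (\<phi> 0)\<^sup>2 + 2 * t\<^sup>2"])
    show "integrable \<mu> (\<lambda>t. 2 * (\<phi> 0)\<^sup>2 + 2 * t\<^sup>2)" using integrable_square finite_measure_law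
      by (intro Bochner_Integration.integrable_add integrable_mult_right) (auto simp: finite_measure.integrable_const)
    show "(\<lambda>t. (\<phi> t)\<^sup>2) \<in> borel_measurable \<mu>" using m by measurable
    have "(\<phi> x)\<^sup>2 \<le> 2 * (\<phi> 0)\<^sup>2 + 2 * x\<^sup>2" for x
    proof -
      have "(\<phi> x)\<^sup>2 \<le> (\<bar>\<phi> 0\<bar> + \<bar>x\<bar>)\<^sup>2"
        using b[of x] by (metis abs_ge_zero abs_le_square_iff abs_of_nonneg order_trans)
      also have "\<dots> \<le> 2 * (\<phi> 0)\<^sup>2 + 2 * x\<^sup>2"
        using zero_le_power2[of "\<bar>\<phi> 0\<bar> - \<bar>x\<bar>"] by (simp add: power2_eq_square algebra_simps)
      finally show ?thesis .
    qed
    then show "AE x in \<mu>. norm ((\<phi> x)\<^sup>2) \<le> norm (2 * (\<phi> 0)\<^sup>2 + 2 * x\<^sup>2)" by simp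
  qed
qed

definition law_variance :: real where
  "law_variance = variance_of \<mu> (\<lambda>t. t)"

lemma variance_lipschitz1_le:
  fixes \<phi> :: "real \<Rightarrow> real"
  assumes "1-lipschitz_on UNIV \<phi>"
  shows "variance_of \<mu> \<phi> \<le> law_variance"
proof -
  let ?m = "\<integral>t. t \<partial>\<mu>"
  have "variance_of \<mu> \<phi> \<le> (\<integral>t. (\<phi> t - \<phi> ?m)\<^sup>2 \<partial>\<mu>)"
    using variance_of_le_integral_sq_diff[OF prob_space_law integrable_lipschitz1[OF assms]] .
  also have "\<dots> \<le> (\<integral>t. (t - ?m)\<^sup>2 \<partial>\<mu>)"
  proof (rule integral_mono)
    show "integrable \<mu> (\<lambda>t. (\<phi> t - \<phi> ?m)\<^sup>2)"
      using integrable_lipschitz1(2)[OF lipschitz1_diff_const[OF assms]] .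
    have "1-lipschitz_on UNIV (\<lambda>t. t - ?m)" unfolding lipschitz1_real_iff by simp
    then show "integrable \<mu> (\<lambda>t. (t - ?m)\<^sup>2)" by (rule integrable_lipschitz1(2))
    fix t
    have "\<bar>\<phi> t - \<phi> ?m\<bar> \<le> \<bar>t - ?m\<bar>" using assms unfolding lipschitz1_real_iff by blast
    then show "(\<phi> t - \<phi> ?m)\<^sup>2 \<le> (t - ?m)\<^sup>2" by (simp add: abs_le_square_iff)
  qed
  finally show ?thesis unfolding law_variance_def variance_of_def .
qed

text \<open>A monotone function with an increment of at least D between a and b is at distance at
  least D/2 from its mean on one of the two tails below a or above b.\<close>

lemma variance_mono_increment_ge:
  fixes h :: "real \<Rightarrow> real"
  assumes "mono h" "1-lipschitz_on UNIV h" "D \<le> h b - h a" "0 \<le> D"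
  shows "D\<^sup>2 / 4 * min (measure \<mu> {..a}) (measure \<mu> {b..}) \<le> variance_of \<mu> h"
proof -
  interpret prob_space \<mu> by (rule prob_space_law)
  define m where "m = (\<integral>t. h t \<partial>\<mu>)"
  have bound: "D\<^sup>2 / 4 * measure \<mu> A \<le> variance_of \<mu> h"
    if A: "A \<in> sets borel" and far: "\<And>t. t \<in> A \<Longrightarrow> D / 2 \<le> \<bar>h t - m\<bar>" for A
  proof -
    have "(\<integral>t. D\<^sup>2 / 4 * indicator A t \<partial>\<mu>) \<le> (\<integral>t. (h t - m)\<^sup>2 \<partial>\<mu>)"
    proof (rule integral_mono)
      show "integrable \<mu> (\<lambda>t. D\<^sup>2 / 4 * indicator A t)"
        using A sets_law by (intro integrable_mult_right integrable_real_indicator) (auto simp: emeasure_eq_measure)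
      show "integrable \<mu> (\<lambda>t. (h t - m)\<^sup>2)"
        using integrable_lipschitz1(2)[OF lipschitz1_diff_const[OF assms(2)]] .
      fix t
      have "t \<in> A \<Longrightarrow> (D / 2)\<^sup>2 \<le> (h t - m)\<^sup>2"
        using far[of t] assms(4) abs_le_square_iff[of "D / 2" "h t - m"] by simp
      then show "D\<^sup>2 / 4 * indicator A t \<le> (h t - m)\<^sup>2"
        by (cases "t \<in> A") (simp_all add: power_divide)
    qed
    then show ?thesis using A sets_law by (simp add: variance_of_def m_def)
  qed
  show ?thesis
  proof (cases "(h a + h b) / 2 \<le> m")
    case True
    have "D\<^sup>2 / 4 * measure \<mu> {..a} \<le> variance_of \<mu> h"
    proof (rule bound)
      fix t assume "t \<in> {..a}"
      then have "h t \<le> h a" using assms(1) by (simp add: monoD)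
      then show "D / 2 \<le> \<bar>h t - m\<bar>" using True assms(3) by (simp add: field_simps abs_if)
    qed simp
    moreover have "D\<^sup>2 / 4 * min (measure \<mu> {..a}) (measure \<mu> {b..}) \<le> D\<^sup>2 / 4 * measure \<mu> {..a}"
      by (intro mult_left_mono) auto
    ultimately show ?thesis by linarith
  next
    case False
    have "D\<^sup>2 / 4 * measure \<mu> {b..} \<le> variance_of \<mu> h"
    proof (rule bound)
      fix t assume "t \<in> {b..}"
      then have "h b \<le> h t" using assms(1) by (simp add: monoD)
      then show "D / 2 \<le> \<bar>h t - m\<bar>" using False assms(3) by (simp add: field_simps abs_if)
    qed simp
    moreover have "D\<^sup>2 / 4 * min (measure \<mu> {..a}) (measure \<mu> {b..}) \<le> D\<^sup>2 / 4 * measure \<mu> {b..}"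
      by (intro mult_left_mono) auto
    ultimately show ?thesis by linarith
  qed
qed

abbreviation iid :: "'i set \<Rightarrow> ('i \<Rightarrow> real) measure" where
  "iid I \<equiv> PiM I (\<lambda>_. \<mu>)"

lemma product_prob_space_law: "product_prob_space (\<lambda>_::'i. \<mu>)"
  unfolding product_prob_space_def product_prob_space_axioms_def product_sigma_finite_def
  using prob_space_law prob_space_imp_sigma_finite by auto

lemma product_sigma_finite_law: "product_sigma_finite (\<lambda>_::'i. \<mu>)"
  using product_prob_space_law unfolding product_prob_space_def by blast

lemma prob_space_iid: "prob_space (iid I)"
  by (rule prob_space_PiM) (rule prob_space_law)

lemma pair_sigma_finite_iid_law: "pair_sigma_finite (iid I) \<mu>"
  unfolding pair_sigma_finite_def
  using prob_space_imp_sigma_finite[OF prob_space_iid] prob_space_imp_sigma_finite[OF prob_space_law]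
  by blast

lemma space_iid: "space (iid I) = PiE I (\<lambda>_. UNIV)"
  by (simp add: space_PiM)

lemma fun_upd_in_space_iid: "x \<in> space (iid I) \<Longrightarrow> x(i := t) \<in> space (iid (insert i I))"
  by (auto simp: space_iid PiE_iff extensional_def)

lemma fun_upd_in_space_iid': "x \<in> space (iid I) \<Longrightarrow> i \<in> I \<Longrightarrow> x(i := t) \<in> space (iid I)"
  using fun_upd_in_space_iid[of x I i t] by (simp add: insert_absorb)

lemma integral_iid_insert:
  fixes F :: "('i \<Rightarrow> real) \<Rightarrow> real"
  assumes "finite I" "a \<notin> I" "integrable (iid (insert a I)) F"
  shows "integral\<^sup>L (iid (insert a I)) F = (\<integral>x. (\<integral>t. F (x(a := t)) \<partial>\<mu>) \<partial>iid I)"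
  using product_sigma_finite.product_integral_insert[OF product_sigma_finite_law assms] .

lemma integrable_iid_component:
  fixes g :: "real \<Rightarrow> real"
  assumes "i \<in> I" "g \<in> borel_measurable \<mu>" "integrable \<mu> g"
  shows "integrable (iid I) (\<lambda>x. g (x i))"
proof -
  have "distr (iid I) \<mu> (\<lambda>x. x i) = \<mu>"
    by (rule distr_PiM_component) (use prob_space_law assms in auto)
  moreover have "(\<lambda>x. x i) \<in> measurable (iid I) \<mu>" using assms by simp
  ultimately show ?thesis using integrable_distr_eq[of "\<lambda>x. x i" "iid I" \<mu> g] assms by simp
qed

lemma borel_measurable_iid_component:
  assumes "s \<in> I" shows "(\<lambda>x. x s) \<in> borel_measurable (iid I)"
proof -
  have "(\<lambda>x. x s) \<in> measurable (iid I) \<mu>" using assms by (rule measurable_component_singleton)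
  moreover have "measurable (iid I) \<mu> = measurable (iid I) borel"
    by (rule measurable_cong_sets[OF refl sets_law])
  ultimately show ?thesis by simp
qed

lemma measure_iid_PiE:
  assumes "finite I" "\<And>i. i \<in> I \<Longrightarrow> A i \<in> sets borel"
  shows "measure (iid I) (PiE I A) = (\<Prod>i\<in>I. measure \<mu> (A i))"
proof -
  interpret finite_product_prob_space "\<lambda>_. \<mu>" I
    unfolding finite_product_prob_space_def finite_product_sigma_finite_def finite_product_sigma_finite_axioms_def
    using assms(1) product_sigma_finite_law product_prob_space_law
    by (simp add: product_prob_space_def product_prob_space_axioms_def)
  show ?thesis using prob_times[of A] assms(2) sets_law by simp
qed

lemma measure_iid_PiE_ge_power:
  assumes "finite I" "T \<subseteq> I" "card T \<le> k" "0 \<le> q" "q \<le> 1"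
    and "\<And>i. i \<in> I \<Longrightarrow> A i \<in> sets borel"
    and "\<And>i. i \<in> T \<Longrightarrow> q \<le> measure \<mu> (A i)" "\<And>i. i \<in> I - T \<Longrightarrow> A i = UNIV"
  shows "q ^ k \<le> measure (iid I) (PiE I A)"
proof -
  have "q ^ k \<le> q ^ card T" using assms(3-5) by (rule power_decreasing)
  also have "\<dots> = (\<Prod>i\<in>I. if i \<in> T then q else 1)"
    using assms(1,2) by (simp add: prod.If_cases Int_absorb1)
  also have "\<dots> \<le> (\<Prod>i\<in>I. measure \<mu> (A i))"
    using assms(4,7,8) prob_space.prob_space[OF prob_space_law] by (intro prod_mono) auto
  also have "\<dots> = measure (iid I) (PiE I A)" using measure_iid_PiE[OF assms(1,6)] by simp
  finally show ?thesis .
qed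

definition coord_lipschitz :: "'i set \<Rightarrow> (('i \<Rightarrow> real) \<Rightarrow> real) \<Rightarrow> bool" where
  "coord_lipschitz I f \<longleftrightarrow> f \<in> borel_measurable (iid I) \<and>
     (\<forall>x\<in>space (iid I). \<forall>i\<in>I. \<forall>t. \<bar>f x - f (x(i := t))\<bar> \<le> \<bar>x i - t\<bar>)"

lemma coord_lipschitz_measurable: "coord_lipschitz I f \<Longrightarrow> f \<in> borel_measurable (iid I)"
  unfolding coord_lipschitz_def by blast

lemma coord_lipschitzD:
  "coord_lipschitz I f \<Longrightarrow> x \<in> space (iid I) \<Longrightarrow> i \<in> I \<Longrightarrow> \<bar>f x - f (x(i := t))\<bar> \<le> \<bar>x i - t\<bar>"
  unfolding coord_lipschitz_def by blast

lemma coord_lipschitz_diff_le_sum: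
  assumes "coord_lipschitz I f" "finite J" "J \<subseteq> I"
  shows "x \<in> space (iid I) \<Longrightarrow> y \<in> space (iid I) \<Longrightarrow> (\<forall>i\<in>I - J. x i = y i) \<Longrightarrow>
     \<bar>f x - f y\<bar> \<le> (\<Sum>i\<in>J. \<bar>x i - y i\<bar>)"
  using assms(2,3)
proof (induction J arbitrary: x rule: finite_induct)
  case empty
  then have "x = y" by (intro PiE_ext[of x I "\<lambda>_. UNIV" y]) (auto simp: space_iid)
  then show ?case by simp
next
  case (insert j J)
  let ?z = "x(j := y j)"
  have j: "j \<in> I" using insert by auto
  have "?z \<in> space (iid I)" using fun_upd_in_space_iid'[OF insert.prems(1) j] .
  moreover have "\<forall>i\<in>I - J. ?z i = y i" using insert.prems by auto
  ultimately have "\<bar>f ?z - f y\<bar> \<le> (\<Sum>i\<in>J. \<bar>?z i - y i\<bar>)" using insert by blast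
  also have "(\<Sum>i\<in>J. \<bar>?z i - y i\<bar>) = (\<Sum>i\<in>J. \<bar>x i - y i\<bar>)"
    using insert.hyps by (intro sum.cong) auto
  finally show ?case
    using coord_lipschitzD[OF assms(1) insert.prems(1) j, of "y j"] insert.hyps by simp
qed

lemma integrable_coord_lipschitz:
  assumes "finite I" "coord_lipschitz I f"
  shows "integrable (iid I) f" "integrable (iid I) (\<lambda>x. (f x)\<^sup>2)"
proof -
  define x0 where "x0 = (\<lambda>i\<in>I. 0::real)"
  have x0: "x0 \<in> space (iid I)" by (simp add: space_iid x0_def)
  have m: "f \<in> borel_measurable (iid I)" using coord_lipschitz_measurable[OF assms(2)] .
  have square_sum: "(u + v)\<^sup>2 \<le> 2 * u\<^sup>2 + 2 * v\<^sup>2" for u v :: real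
    using zero_le_power2[of "u - v"] by (simp add: power2_eq_square algebra_simps)
  have bound: "(f x)\<^sup>2 \<le> 2 * (f x0)\<^sup>2 + 2 * real (card I) * (\<Sum>i\<in>I. (x i)\<^sup>2)"
    if x: "x \<in> space (iid I)" for x
  proof -
    let ?S = "\<Sum>i\<in>I. \<bar>x i\<bar>"
    have "\<bar>f x - f x0\<bar> \<le> (\<Sum>i\<in>I. \<bar>x i - x0 i\<bar>)"
      using coord_lipschitz_diff_le_sum[OF assms(2,1) order_refl x x0] by simp
    also have "\<dots> = ?S" by (intro sum.cong) (auto simp: x0_def)
    finally have "\<bar>f x\<bar> \<le> \<bar>f x0\<bar> + ?S" by linarith
    moreover have "0 \<le> \<bar>f x0\<bar> + ?S" by (simp add: sum_nonneg)
    ultimately have "(f x)\<^sup>2 \<le> (\<bar>f x0\<bar> + ?S)\<^sup>2"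
      using abs_le_square_iff[of "f x" "\<bar>f x0\<bar> + ?S"] by simp
    also have "\<dots> \<le> 2 * (f x0)\<^sup>2 + 2 * ?S\<^sup>2" using square_sum[of "\<bar>f x0\<bar>" ?S] by simp
    finally have "(f x)\<^sup>2 \<le> 2 * (f x0)\<^sup>2 + 2 * ?S\<^sup>2" .
    moreover have "2 * ?S\<^sup>2 \<le> 2 * real (card I) * (\<Sum>i\<in>I. (x i)\<^sup>2)"
      using sum_squared_le_sum_of_squares[of "\<lambda>i. \<bar>x i\<bar>" I] by (simp add: mult.commute)
    ultimately show ?thesis by linarith
  qed
  have "(\<lambda>t. t\<^sup>2) \<in> borel_measurable \<mu>" by (rule borel_measurable_law) simp
  then have "integrable (iid I) (\<lambda>x. (x i)\<^sup>2)" if "i \<in> I" for i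
    using integrable_iid_component[OF that _ integrable_square] by blast
  moreover have "finite_measure (iid I)" by (rule prob_space.finite_measure[OF prob_space_iid])
  ultimately have "integrable (iid I) (\<lambda>x. 2 * (f x0)\<^sup>2 + 2 * real (card I) * (\<Sum>i\<in>I. (x i)\<^sup>2))"
    by (intro Bochner_Integration.integrable_add integrable_sum integrable_mult_right)
       (auto simp: finite_measure.integrable_const)
  then show square: "integrable (iid I) (\<lambda>x. (f x)\<^sup>2)"
  proof (rule Bochner_Integration.integrable_bound)
    show "(\<lambda>x. (f x)\<^sup>2) \<in> borel_measurable (iid I)" using m by measurable
    show "AE x in iid I. norm ((f x)\<^sup>2) \<le>
        norm (2 * (f x0)\<^sup>2 + 2 * real (card I) * (\<Sum>i\<in>I. (x i)\<^sup>2))"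
      using bound by (intro AE_I2) (simp add: sum_nonneg)
  qed
  show "integrable (iid I) f"
    by (rule finite_measure.square_integrable_imp_integrable[OF prob_space.finite_measure[OF prob_space_iid] m square])
qed

lemma coord_lipschitz_fun_upd:
  assumes "coord_lipschitz I f" "i \<in> I"
  shows "coord_lipschitz I (\<lambda>z. f (z(i := t)))"
  unfolding coord_lipschitz_def
proof (intro conjI ballI allI)
  have "(\<lambda>x. x(i := t)) \<in> measurable (iid I) (iid (insert i I))"
    by (rule measurable_fun_upd[where J=I]) auto
  then have "(\<lambda>x. x(i := t)) \<in> measurable (iid I) (iid I)" using assms(2) by (simp add: insert_absorb)
  then show "(\<lambda>z. f (z(i := t))) \<in> borel_measurable (iid I)"
    using measurable_comp coord_lipschitz_measurable[OF assms(1)] by (auto simp: comp_def)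
  fix z j s assume z: "z \<in> space (iid I)" and j: "j \<in> I"
  show "\<bar>f (z(i := t)) - f ((z(j := s))(i := t))\<bar> \<le> \<bar>z j - s\<bar>"
  proof (cases "j = i")
    case False
    then have "(z(i := t))(j := s) = (z(j := s))(i := t)" by (intro fun_upd_twist) auto
    then show ?thesis
      using coord_lipschitzD[OF assms(1) fun_upd_in_space_iid'[OF z assms(2), of t] j, of s] False by simp
  qed simp
qed

lemma coord_lipschitz_fun_upd_outside:
  assumes "coord_lipschitz (insert a I) f" "a \<notin> I"
  shows "coord_lipschitz I (\<lambda>x. f (x(a := t)))"
  unfolding coord_lipschitz_def
proof (intro conjI ballI allI)
  have "(\<lambda>x. x(a := t)) \<in> measurable (iid I) (iid (insert a I))"
    by (rule measurable_fun_upd[where J=I]) auto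
  then show "(\<lambda>x. f (x(a := t))) \<in> borel_measurable (iid I)"
    using measurable_comp coord_lipschitz_measurable[OF assms(1)] by (auto simp: comp_def)
  fix x i s assume x: "x \<in> space (iid I)" and i: "i \<in> I"
  have "i \<noteq> a" using i assms(2) by auto
  then have "(x(a := t))(i := s) = (x(i := s))(a := t)" by (intro fun_upd_twist) auto
  then show "\<bar>f (x(a := t)) - f ((x(i := s))(a := t))\<bar> \<le> \<bar>x i - s\<bar>"
    using coord_lipschitzD[OF assms(1) fun_upd_in_space_iid[OF x, of a t], of i s] i \<open>i \<noteq> a\<close> by simp
qed

lemma lipschitz1_coord_lipschitz_slice:
  assumes "coord_lipschitz (insert a I) f" "x \<in> space (iid I)"
  shows "1-lipschitz_on UNIV (\<lambda>t. f (x(a := t)))"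
  unfolding lipschitz1_real_iff
  using coord_lipschitzD[OF assms(1) fun_upd_in_space_iid[OF assms(2)]] by fastforce

definition integrate_out :: "'i \<Rightarrow> (('i \<Rightarrow> real) \<Rightarrow> real) \<Rightarrow> ('i \<Rightarrow> real) \<Rightarrow> real" where
  "integrate_out a f x = (\<integral>t. f (x(a := t)) \<partial>\<mu>)"

lemma borel_measurable_fun_upd_pair:
  assumes "f \<in> borel_measurable (iid (insert a I))"
  shows "(\<lambda>(x, t). f (x(a := t))) \<in> borel_measurable (iid I \<Otimes>\<^sub>M \<mu>)"
proof -
  have "(\<lambda>z. (fst z)(a := snd z)) \<in> measurable (iid I \<Otimes>\<^sub>M \<mu>) (iid (insert a I))"
    by (rule measurable_fun_upd[where J=I]) auto
  from measurable_comp[OF this assms] show ?thesis by (simp add: comp_def case_prod_beta')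
qed

lemma borel_measurable_integrate_out:
  assumes "f \<in> borel_measurable (iid (insert a I))"
  shows "integrate_out a f \<in> borel_measurable (iid I)"
  unfolding integrate_out_def
  by (rule sigma_finite_measure.borel_measurable_lebesgue_integral[OF prob_space_imp_sigma_finite[OF prob_space_law]])
     (rule borel_measurable_fun_upd_pair[OF assms])

lemma coord_lipschitz_integrate_out:
  assumes "coord_lipschitz (insert a I) f" "a \<notin> I"
  shows "coord_lipschitz I (integrate_out a f)"
  unfolding coord_lipschitz_def
proof (intro conjI ballI allI)
  show "integrate_out a f \<in> borel_measurable (iid I)"
    by (rule borel_measurable_integrate_out[OF coord_lipschitz_measurable[OF assms(1)]])
  fix x i s assume x: "x \<in> space (iid I)" and i: "i \<in> I"
  have x': "x(i := s) \<in> space (iid I)" using fun_upd_in_space_iid'[OF x i] .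
  have "i \<noteq> a" using i assms(2) by auto
  show "\<bar>integrate_out a f x - integrate_out a f (x(i := s))\<bar> \<le> \<bar>x i - s\<bar>"
    unfolding integrate_out_def
  proof (rule abs_integral_diff_le[OF prob_space_law])
    show "integrable \<mu> (\<lambda>t. f (x(a := t)))" "integrable \<mu> (\<lambda>t. f ((x(i := s))(a := t)))"
      using integrable_lipschitz1(1)[OF lipschitz1_coord_lipschitz_slice[OF assms(1)]] x x' by blast+
    fix t
    have "(x(a := t))(i := s) = (x(i := s))(a := t)" using \<open>i \<noteq> a\<close> by (intro fun_upd_twist) auto
    then show "\<bar>f (x(a := t)) - f ((x(i := s))(a := t))\<bar> \<le> \<bar>x i - s\<bar>"
      using coord_lipschitzD[OF assms(1) fun_upd_in_space_iid[OF x, of a t], of i s] i \<open>i \<noteq> a\<close> by simp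
  qed
qed

lemma total_variance_iid_insert:
  assumes fin: "finite I" and a: "a \<notin> I" and f: "coord_lipschitz (insert a I) f"
  shows "integrable (iid I) (\<lambda>x. variance_of \<mu> (\<lambda>t. f (x(a := t))))"
    and "variance_of (iid (insert a I)) f =
      (\<integral>x. variance_of \<mu> (\<lambda>t. f (x(a := t))) \<partial>iid I) + variance_of (iid I) (integrate_out a f)"
proof -
  let ?V = "\<lambda>x. variance_of \<mu> (\<lambda>t. f (x(a := t)))"
  let ?g = "integrate_out a f"
  have fin': "finite (insert a I)" using fin by simp
  have mf: "f \<in> borel_measurable (iid (insert a I))" using coord_lipschitz_measurable[OF f] .
  have "(\<lambda>(x, t). (f (x(a := t)) - ?g x)\<^sup>2) \<in> borel_measurable (iid I \<Otimes>\<^sub>M \<mu>)"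
    using borel_measurable_fun_upd_pair[OF mf] borel_measurable_integrate_out[OF mf]
    by (simp add: case_prod_beta')
  then have "?V \<in> borel_measurable (iid I)"
    unfolding variance_of_def integrate_out_def[symmetric]
    by (rule sigma_finite_measure.borel_measurable_lebesgue_integral[OF prob_space_imp_sigma_finite[OF prob_space_law]])
  moreover have "norm (?V x) \<le> law_variance" if "x \<in> space (iid I)" for x
    using variance_lipschitz1_le[OF lipschitz1_coord_lipschitz_slice[OF f that]]
      variance_of_nonneg[of \<mu> "\<lambda>t. f (x(a := t))"] by simp
  ultimately show iV: "integrable (iid I) ?V"
    using prob_space.finite_measure[OF prob_space_iid]
    by (intro finite_measure.integrable_const_bound[where B=law_variance]) auto
  have g: "coord_lipschitz I ?g" using coord_lipschitz_integrate_out[OF f a] .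
  have mean: "(\<integral>x. f x \<partial>iid (insert a I)) = (\<integral>x. ?g x \<partial>iid I)"
    using integral_iid_insert[OF fin a integrable_coord_lipschitz(1)[OF fin' f]] unfolding integrate_out_def .
  have "(\<integral>x. (f x)\<^sup>2 \<partial>iid (insert a I)) = (\<integral>x. (\<integral>t. (f (x(a := t)))\<^sup>2 \<partial>\<mu>) \<partial>iid I)"
    using integral_iid_insert[OF fin a integrable_coord_lipschitz(2)[OF fin' f]] .
  also have "\<dots> = (\<integral>x. ?V x + (?g x)\<^sup>2 \<partial>iid I)"
  proof (rule Bochner_Integration.integral_cong[OF refl])
    fix x assume "x \<in> space (iid I)"
    from integrable_lipschitz1[OF lipschitz1_coord_lipschitz_slice[OF f this]]
    show "(\<integral>t. (f (x(a := t)))\<^sup>2 \<partial>\<mu>) = ?V x + (?g x)\<^sup>2"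
      using variance_of_eq[OF prob_space_law] unfolding integrate_out_def by simp
  qed
  finally have square: "(\<integral>x. (f x)\<^sup>2 \<partial>iid (insert a I)) = (\<integral>x. ?V x + (?g x)\<^sup>2 \<partial>iid I)" .
  show "variance_of (iid (insert a I)) f = (\<integral>x. ?V x \<partial>iid I) + variance_of (iid I) ?g"
    using variance_of_eq[OF prob_space_iid integrable_coord_lipschitz[OF fin' f]]
      variance_of_eq[OF prob_space_iid integrable_coord_lipschitz[OF fin g]]
      iV integrable_coord_lipschitz(2)[OF fin g]
    unfolding mean square by simp
qed

theorem efron_stein:
  assumes "finite I" "coord_lipschitz I f"
  shows "variance_of (iid I) f \<le> real (card I) * law_variance"
  using assms
proof (induction I arbitrary: f rule: finite_induct)
  case empty
  have "variance_of (iid {}) f \<le> (\<integral>x. (f x - f (\<lambda>_. undefined))\<^sup>2 \<partial>iid {})"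
    using variance_of_le_integral_sq_diff[OF prob_space_iid integrable_coord_lipschitz[OF _ empty.prems]] by simp
  also have "(\<integral>x. (f x - f (\<lambda>_. undefined))\<^sup>2 \<partial>iid {}) = 0"
    by (rule integral_eq_zero_AE, rule AE_I2) (simp add: space_iid)
  finally show ?case by simp
next
  case (insert a I f)
  let ?V = "\<lambda>x. variance_of \<mu> (\<lambda>t. f (x(a := t)))"
  note decomp = total_variance_iid_insert[OF insert.hyps(1,2) insert.prems]
  interpret prob_space "iid I" by (rule prob_space_iid)
  have "(\<integral>x. ?V x \<partial>iid I) \<le> (\<integral>x. law_variance \<partial>iid I)"
    using variance_lipschitz1_le[OF lipschitz1_coord_lipschitz_slice[OF insert.prems]]
    by (intro integral_mono[OF decomp(1)]) auto
  then have "(\<integral>x. ?V x \<partial>iid I) \<le> law_variance" by (simp add: prob_space)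
  moreover have "variance_of (iid I) (integrate_out a f) \<le> real (card I) * law_variance"
    using insert.IH[OF coord_lipschitz_integrate_out[OF insert.prems insert.hyps(2)]] .
  moreover have "real (card (insert a I)) * law_variance = law_variance + real (card I) * law_variance"
    using insert.hyps by (simp add: algebra_simps)
  ultimately show ?case using decomp(2) by linarith
qed

definition coord_expectation :: "'i set \<Rightarrow> (('i \<Rightarrow> real) \<Rightarrow> real) \<Rightarrow> 'i \<Rightarrow> real \<Rightarrow> real" where
  "coord_expectation I f i t = (\<integral>z. f (z(i := t)) \<partial>iid I)"

lemma lipschitz1_coord_expectation:
  assumes "finite I" "coord_lipschitz I f" "i \<in> I"
  shows "1-lipschitz_on UNIV (coord_expectation I f i)"
  unfolding lipschitz1_real_iff coord_expectation_def
proof (intro allI)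
  fix t s
  show "\<bar>(\<integral>z. f (z(i := t)) \<partial>iid I) - (\<integral>z. f (z(i := s)) \<partial>iid I)\<bar> \<le> \<bar>t - s\<bar>"
  proof (rule abs_integral_diff_le[OF prob_space_iid])
    show "integrable (iid I) (\<lambda>z. f (z(i := t)))" "integrable (iid I) (\<lambda>z. f (z(i := s)))"
      using integrable_coord_lipschitz(1)[OF assms(1) coord_lipschitz_fun_upd[OF assms(2,3)]] by blast+
    fix z assume "z \<in> space (iid I)"
    then show "\<bar>f (z(i := t)) - f (z(i := s))\<bar> \<le> \<bar>t - s\<bar>"
      using coord_lipschitzD[OF assms(2) fun_upd_in_space_iid'[OF _ assms(3)] assms(3), of z t s] by simp
  qed
qed

lemma coord_expectation_insert:
  assumes "finite I" "a \<notin> I" "coord_lipschitz (insert a I) f" "i \<in> I"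
  shows "coord_expectation (insert a I) f i = coord_expectation I (integrate_out a f) i"
proof
  fix t
  have "i \<noteq> a" using assms(2,4) by auto
  have "coord_expectation (insert a I) f i t = (\<integral>x. (\<integral>s. f ((x(a := s))(i := t)) \<partial>\<mu>) \<partial>iid I)"
    unfolding coord_expectation_def
    by (rule integral_iid_insert[OF assms(1,2) integrable_coord_lipschitz(1)])
       (use assms coord_lipschitz_fun_upd[OF assms(3), of i] in auto)
  also have "\<dots> = coord_expectation I (integrate_out a f) i t"
    unfolding coord_expectation_def integrate_out_def using \<open>i \<noteq> a\<close> by (simp add: fun_upd_twist)
  finally show "coord_expectation (insert a I) f i t = coord_expectation I (integrate_out a f) i t" .
qed

text \<open>Jensen's inequality for the conditional expectation given the coordinate a, combined with
  Fubini's theorem.\<close>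

lemma variance_coord_expectation_le:
  assumes fin: "finite I" and a: "a \<notin> I" and f: "coord_lipschitz (insert a I) f"
  shows "variance_of \<mu> (coord_expectation (insert a I) f a) \<le>
    (\<integral>x. variance_of \<mu> (\<lambda>t. f (x(a := t))) \<partial>iid I)"
proof -
  let ?h = "coord_expectation (insert a I) f a" and ?g = "integrate_out a f"
  let ?F = "\<lambda>x t. (f (x(a := t)) - ?g x)\<^sup>2"
  let ?c = "\<integral>x. ?g x \<partial>iid I"
  have fin': "finite (insert a I)" using fin by simp
  have g: "coord_lipschitz I ?g" using coord_lipschitz_integrate_out[OF f a] .
  have f_a: "coord_lipschitz I (\<lambda>x. f (x(a := t)))" for t using coord_lipschitz_fun_upd_outside[OF f a] .
  have h: "?h t = (\<integral>x. f (x(a := t)) \<partial>iid I)" for t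
  proof -
    have "?h t = (\<integral>x. (\<integral>s. f ((x(a := s))(a := t)) \<partial>\<mu>) \<partial>iid I)"
      unfolding coord_expectation_def
      by (rule integral_iid_insert[OF fin a integrable_coord_lipschitz(1)[OF fin' coord_lipschitz_fun_upd[OF f]]]) simp
    then show ?thesis using prob_space.prob_space[OF prob_space_law] by simp
  qed
  have measurable_F: "(\<lambda>(x, t). ?F x t) \<in> borel_measurable (iid I \<Otimes>\<^sub>M \<mu>)"
    using borel_measurable_fun_upd_pair[OF coord_lipschitz_measurable[OF f]]
      coord_lipschitz_measurable[OF g] by (simp add: case_prod_beta')
  have integrable_F: "integrable (iid I \<Otimes>\<^sub>M \<mu>) (\<lambda>(x, t). ?F x t)"
  proof (rule pair_sigma_finite.Fubini_integrable[OF pair_sigma_finite_iid_law measurable_F])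
    show "integrable (iid I) (\<lambda>x. \<integral>t. norm (case (x, t) of (x, t) \<Rightarrow> ?F x t) \<partial>\<mu>)"
      using total_variance_iid_insert(1)[OF fin a f] by (simp add: variance_of_def integrate_out_def)
    show "AE x in iid I. integrable \<mu> (\<lambda>t. case (x, t) of (x, t) \<Rightarrow> ?F x t)"
      using integrable_lipschitz1(2)[OF lipschitz1_diff_const[OF lipschitz1_coord_lipschitz_slice[OF f]]]
      by (intro AE_I2) simp
  qed
  have jensen: "(?h t - ?c)\<^sup>2 \<le> (\<integral>x. ?F x t \<partial>iid I)" for t
  proof -
    note int_f = integrable_coord_lipschitz[OF fin f_a] and int_g = integrable_coord_lipschitz[OF fin g]
    have "?h t - ?c = (\<integral>x. f (x(a := t)) - ?g x \<partial>iid I)" unfolding h using int_f int_g by simp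
    also have "(\<dots>)\<^sup>2 \<le> (\<integral>x. ?F x t \<partial>iid I)"
      using int_f int_g coord_lipschitz_measurable[OF f_a] coord_lipschitz_measurable[OF g]
      by (intro square_integral_le_integral_square[OF prob_space_iid] integrable_square_diff) auto
    finally show ?thesis .
  qed
  have "variance_of \<mu> ?h \<le> (\<integral>t. (?h t - ?c)\<^sup>2 \<partial>\<mu>)"
    using variance_of_le_integral_sq_diff[OF prob_space_law integrable_lipschitz1[OF lipschitz1_coord_expectation[OF fin' f]]]
    by simp
  also have "\<dots> \<le> (\<integral>t. (\<integral>x. ?F x t \<partial>iid I) \<partial>\<mu>)"
    using pair_sigma_finite.integrable_snd[OF pair_sigma_finite_iid_law integrable_F]
      integrable_lipschitz1(2)[OF lipschitz1_diff_const[OF lipschitz1_coord_expectation[OF fin' f]]]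
    by (intro integral_mono jensen) auto
  also have "\<dots> = (\<integral>x. (\<integral>t. ?F x t \<partial>\<mu>) \<partial>iid I)"
    using pair_sigma_finite.Fubini_integral[OF pair_sigma_finite_iid_law integrable_F] by simp
  finally show ?thesis unfolding variance_of_def integrate_out_def .
qed

theorem sum_variance_coord_expectation_le:
  assumes "finite I" "coord_lipschitz I f"
  shows "(\<Sum>i\<in>I. variance_of \<mu> (coord_expectation I f i)) \<le> variance_of (iid I) f"
  using assms
proof (induction I arbitrary: f rule: finite_induct)
  case empty
  then show ?case using variance_of_nonneg by simp
next
  case (insert a I f)
  have "(\<Sum>i\<in>I. variance_of \<mu> (coord_expectation (insert a I) f i)) =
      (\<Sum>i\<in>I. variance_of \<mu> (coord_expectation I (integrate_out a f) i))"
    using coord_expectation_insert[OF insert.hyps insert.prems] by simp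
  also have "\<dots> \<le> variance_of (iid I) (integrate_out a f)"
    using insert.IH[OF coord_lipschitz_integrate_out[OF insert.prems insert.hyps(2)]] .
  finally show ?case
    using variance_coord_expectation_le[OF insert.hyps insert.prems]
      total_variance_iid_insert(2)[OF insert.hyps insert.prems] insert.hyps by simp
qed

lemma coord_lipschitz_ground_energy: "coord_lipschitz (torus_sites n d) (ground_energy n d)"
  unfolding coord_lipschitz_def
proof (intro conjI ballI allI)
  have "(\<lambda>J. MIN M\<in>{M. is_matching n d M}. energy J M) \<in> borel_measurable (iid (torus_sites n d))"
  proof (rule borel_measurable_Min[OF finite_matchings])
    fix M assume "M \<in> {M. is_matching n d M}"
    then have "M \<subseteq> torus_sites n d" using is_matching_subset_sites by blast
    then show "(\<lambda>J. energy J M) \<in> borel_measurable (iid (torus_sites n d))"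
      unfolding energy_def by (intro borel_measurable_sum borel_measurable_iid_component) blast
  qed
  then show "ground_energy n d \<in> borel_measurable (iid (torus_sites n d))"
    by (simp add: ground_energy_eq_Min[abs_def])
qed (rule ground_energy_fun_upd_lipschitz)

lemma measure_le_coord_expectation_increment:
  assumes "finite I" "coord_lipschitz I f" "i \<in> I" "E \<in> sets (iid I)"
    and "\<And>z. z \<in> space (iid I) \<Longrightarrow> f (z(i := a)) \<le> f (z(i := b))"
    and "\<And>z. z \<in> E \<Longrightarrow> f (z(i := a)) + D \<le> f (z(i := b))"
  shows "D * measure (iid I) E \<le> coord_expectation I f i b - coord_expectation I f i a"
proof -
  have int: "integrable (iid I) (\<lambda>z. f (z(i := t)))" for t
    using integrable_coord_lipschitz(1)[OF assms(1) coord_lipschitz_fun_upd[OF assms(2,3)]] .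
  have "D * indicator E z \<le> f (z(i := b)) - f (z(i := a))" if "z \<in> space (iid I)" for z
    using assms(5)[OF that] assms(6)[of z] by (cases "z \<in> E") auto
  moreover have "integrable (iid I) (indicator E :: _ \<Rightarrow> real)"
    using finite_measure.emeasure_finite[OF prob_space.finite_measure[OF prob_space_iid[of I]], of E]
    by (intro integrable_real_indicator[OF assms(4)]) (simp add: less_top)
  ultimately have "(\<integral>z. D * indicator E z \<partial>iid I) \<le> (\<integral>z. f (z(i := b)) - f (z(i := a)) \<partial>iid I)"
    using int by (intro integral_mono) auto
  then show ?thesis
    using assms(4) int unfolding coord_expectation_def by simp
qed

lemma variance_coord_expectation_vertex_ge:
  assumes "n \<ge> 2" "v \<in> torus_verts n d" "a \<le> b" "0 \<le> q"
    and "q \<le> measure \<mu> {..<w}" "q \<le> measure \<mu> {b + w<..}"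
  shows "((b - a) * q ^ (4 * d))\<^sup>2 / 4 * min (measure \<mu> {..a}) (measure \<mu> {b..})
    \<le> variance_of \<mu> (coord_expectation (torus_sites n d) (ground_energy n d) (Vtx v))"
proof -
  let ?I = "torus_sites n d" and ?H = "ground_energy n d" and ?A = "isolating_ranges n d v b w"
  let ?h = "coord_expectation ?I ?H (Vtx v)" and ?T = "Edg ` incident_edges n d v \<union> Vtx ` torus_neighbours n d v"
  have v: "Vtx v \<in> ?I" using assms(2) unfolding torus_sites_def by blast
  have H: "coord_lipschitz ?I ?H" by (rule coord_lipschitz_ground_energy)
  have sets: "?A s \<in> sets borel" for s unfolding isolating_ranges_def by auto
  then have event: "PiE ?I ?A \<in> sets (iid ?I)"
    using sets_law by (intro sets_PiM_I_finite finite_torus_sites) auto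
  have "q \<le> 1" using assms(5) prob_space.prob_le_1[OF prob_space_law] order_trans by blast
  moreover have "?T \<subseteq> ?I"
    using torus_edge_subset_verts unfolding torus_sites_def incident_edges_def torus_neighbours_def by blast
  moreover have "card ?T \<le> 4 * d"
    using card_Un_le[of "Edg ` incident_edges n d v" "Vtx ` torus_neighbours n d v"]
      card_image_le[OF finite_incident_edges, of Edg n d v] card_image_le[OF finite_torus_neighbours, of Vtx n d v]
      card_incident_edges_le[OF assms(2)] card_torus_neighbours_le[OF assms(2)] by linarith
  ultimately have "q ^ (4 * d) \<le> measure (iid ?I) (PiE ?I ?A)"
    using assms(4-6) sets by (intro measure_iid_PiE_ge_power finite_torus_sites)
      (auto simp: isolating_ranges_def)
  moreover have "(b - a) * measure (iid ?I) (PiE ?I ?A) \<le> ?h b - ?h a"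
    using assms(3) ground_energy_jump_isolating[OF assms(1,2)]
    by (intro measure_le_coord_expectation_increment[OF finite_torus_sites H v event] ground_energy_fun_upd_mono)
  ultimately have "(b - a) * q ^ (4 * d) \<le> ?h b - ?h a"
    using assms(3) by (meson diff_ge_0_iff_ge mult_left_mono order_trans)
  moreover have "mono ?h"
    unfolding coord_expectation_def
    by (intro monoI integral_mono integrable_coord_lipschitz(1)[OF finite_torus_sites coord_lipschitz_fun_upd[OF H v]] ground_energy_fun_upd_mono)
  ultimately show ?thesis
    using lipschitz1_coord_expectation[OF finite_torus_sites H v] assms(3,4)
    by (intro variance_mono_increment_ge) auto
qed

lemma variance_ground_energy_ge:
  assumes "n \<ge> 2" "a \<le> b" "0 \<le> q" "q \<le> measure \<mu> {..<w}" "q \<le> measure \<mu> {b + w<..}"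
  shows "((b - a) * q ^ (4 * d))\<^sup>2 / 4 * min (measure \<mu> {..a}) (measure \<mu> {b..}) * real n ^ d
    \<le> variance_of (iid (torus_sites n d)) (ground_energy n d)"
proof -
  let ?C = "((b - a) * q ^ (4 * d))\<^sup>2 / 4 * min (measure \<mu> {..a}) (measure \<mu> {b..})"
    and ?V = "\<lambda>s. variance_of \<mu> (coord_expectation (torus_sites n d) (ground_energy n d) s)"
  have "?C * real n ^ d = (\<Sum>v\<in>torus_verts n d. ?C)" using card_torus_verts[of n d] by simp
  also have "\<dots> \<le> (\<Sum>v\<in>torus_verts n d. ?V (Vtx v))"
    using variance_coord_expectation_vertex_ge[OF assms(1) _ assms(2-5)] by (intro sum_mono)
  also have "\<dots> = (\<Sum>s\<in>Vtx ` torus_verts n d. ?V s)" by (simp add: sum.reindex inj_on_def)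
  also have "\<dots> \<le> (\<Sum>s\<in>torus_sites n d. ?V s)"
    by (intro sum_mono2 finite_torus_sites) (auto simp: torus_sites_def variance_of_nonneg)
  also have "\<dots> \<le> variance_of (iid (torus_sites n d)) (ground_energy n d)"
    by (rule sum_variance_coord_expectation_le[OF finite_torus_sites coord_lipschitz_ground_energy])
  finally show ?thesis .
qed

lemma variance_ground_energy_le:
  "variance_of (iid (torus_sites n d)) (ground_energy n d) \<le> real (d + 1) * law_variance * real n ^ d"
proof -
  have "variance_of (iid (torus_sites n d)) (ground_energy n d) \<le> real (card (torus_sites n d)) * law_variance"
    by (rule efron_stein[OF finite_torus_sites coord_lipschitz_ground_energy])
  also have "\<dots> \<le> real ((d + 1) * n ^ d) * law_variance"
    unfolding law_variance_def
    by (intro mult_right_mono variance_of_nonneg) (simp only: of_nat_le_iff card_torus_sites_le)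
  finally show ?thesis by (simp add: algebra_simps)
qed

end

section \<open>Good weight distributions\<close>

lemma square_integrable_law_weight_dist:
  assumes "good_density p \<beta>" "\<delta> > 0" "integrable (weight_dist p) (\<lambda>x. \<bar>x\<bar> powr (4 + \<delta>))"
  shows "square_integrable_law (weight_dist p)"
  unfolding square_integrable_law_def
proof (intro conjI)
  show "prob_space (weight_dist p)" using assms(1) unfolding good_density_def weight_dist_def by blast
  show sets: "sets (weight_dist p) = sets borel" unfolding weight_dist_def by simp
  show "integrable (weight_dist p) (\<lambda>t. t\<^sup>2)"
  proof (rule Bochner_Integration.integrable_bound[of _ "\<lambda>t. 1 + \<bar>t\<bar> powr (4 + \<delta>)"])
    show "integrable (weight_dist p) (\<lambda>t. 1 + \<bar>t\<bar> powr (4 + \<delta>))"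
      using assms(3) prob_space.finite_measure[OF \<open>prob_space (weight_dist p)\<close>]
      by (intro Bochner_Integration.integrable_add) (auto simp: finite_measure.integrable_const)
    show "(\<lambda>t. t\<^sup>2) \<in> borel_measurable (weight_dist p)"
      unfolding measurable_cong_sets[OF sets refl] by (intro borel_measurable_continuous_onI continuous_intros)
    have "t\<^sup>2 \<le> 1 + \<bar>t\<bar> powr (4 + \<delta>)" for t :: real
    proof (cases "\<bar>t\<bar> \<le> 1")
      case True
      then have "t\<^sup>2 \<le> 1" by (simp add: abs_square_le_1)
      then show ?thesis using powr_ge_zero[of "\<bar>t\<bar>" "4 + \<delta>"] by linarith
    next
      case False
      then have "\<bar>t\<bar> powr 2 \<le> \<bar>t\<bar> powr (4 + \<delta>)" using assms(2) by (intro powr_mono) auto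
      moreover have "\<bar>t\<bar> powr 2 = t\<^sup>2" using False by (simp add: powr_numeral)
      ultimately show ?thesis by simp
    qed
    then show "AE t in weight_dist p. norm (t\<^sup>2) \<le> norm (1 + \<bar>t\<bar> powr (4 + \<delta>))" by simp
  qed
qed

lemma measure_weight_dist_pos:
  assumes "good_density p \<beta>" "\<beta> < ereal lo" "lo < hi" "{lo<..<hi} \<subseteq> S" "S \<in> sets borel"
  shows "0 < measure (weight_dist p) S"
proof -
  let ?A = "{lo<..<hi}"
  have P: "prob_space (weight_dist p)" and p: "p \<in> borel_measurable borel"
    and pos: "\<And>x. \<beta> < ereal x \<Longrightarrow> p x > 0"
    using assms(1) unfolding good_density_def weight_dist_def by auto
  have p_pos: "p x > 0" if "x \<in> ?A" for x
    using that assms(2) pos[of x] by (metis greaterThanLessThan_iff less_ereal.simps(1) order.strict_trans)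
  have "emeasure (weight_dist p) ?A \<noteq> 0"
  proof
    assume "emeasure (weight_dist p) ?A = 0"
    then have "(\<integral>\<^sup>+x. ennreal (p x) * indicator ?A x \<partial>lborel) = 0"
      unfolding weight_dist_def using p by (subst (asm) emeasure_density) auto
    then have "AE x in lborel. ennreal (p x) * indicator ?A x = 0"
      using p by (subst (asm) nn_integral_0_iff_AE) auto
    then have "AE x in lborel. x \<notin> ?A"
    proof (rule AE_mp, intro AE_I2 impI)
      fix x assume "ennreal (p x) * indicator ?A x = 0"
      then show "x \<notin> ?A" using p_pos[of x] by (auto simp: indicator_def ennreal_eq_0_iff)
    qed
    then have "?A \<in> null_sets lborel" by (subst AE_iff_null_sets) auto
    then show False using assms(3) by auto
  qed
  then have "0 < measure (weight_dist p) ?A"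
    using finite_measure.emeasure_eq_measure[OF prob_space.finite_measure[OF P]] by (simp add: zero_less_measure_iff)
  also have "\<dots> \<le> measure (weight_dist p) S"
    using assms(4,5) prob_space.finite_measure[OF P]
    by (intro finite_measure.finite_measure_mono) (auto simp: weight_dist_def)
  finally show ?thesis .
qed

lemma ereal_less_nonneg_realE:
  assumes "\<beta> \<noteq> \<infinity>"
  obtains c :: real where "\<beta> < ereal c" "0 \<le> c"
proof (cases \<beta>)
  case (real r)
  have "ereal r < ereal (max 0 (r + 1))" by (simp only: less_ereal.simps)
  then show ?thesis using that[of "max 0 (r + 1)"] real by (metis max.cobounded1)
qed (use assms that[of 0] in auto)

theorem lemma6p1:
  fixes d :: nat and p :: "real \<Rightarrow> real" and \<beta> :: ereal and \<delta> :: real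
  assumes "d \<ge> 2"
    and "good_density p \<beta>"
    and "\<delta> > 0"
    and "integrable (weight_dist p) (\<lambda>x. \<bar>x\<bar> powr (4 + \<delta>))"
  shows "\<exists>C1 C2. C1 > 0 \<and> C2 > 0 \<and>
           (\<forall>n\<ge>3. C1 * real n ^ d \<le> variance_of (weight_field p n d) (ground_energy n d)
                 \<and> variance_of (weight_field p n d) (ground_energy n d) \<le> C2 * real n ^ d)"
proof -
  \<comment> \<open>The argument works for every d and every n \<ge> 2, and uses only the second moment.\<close>
  let ?\<mu> = "weight_dist p"
  interpret square_integrable_law ?\<mu> by (rule square_integrable_law_weight_dist[OF assms(2-4)])
  obtain c where c: "\<beta> < ereal c" "0 \<le> c"
    using assms(2) unfolding good_density_def by (blast elim: ereal_less_nonneg_realE)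
  have pos: "0 < measure ?\<mu> S" if "{x<..<x + 1} \<subseteq> S" "S \<in> sets borel" "c \<le> x" for S x
    using measure_weight_dist_pos[OF assms(2) _ _ that(1,2)] c(1) that(3) by (simp add: order_less_le_trans)
  define q where "q = min (measure ?\<mu> {..<c + 1}) (measure ?\<mu> {c + 2 + (c + 1)<..})"
  define C1 where "C1 = (q ^ (4 * d))\<^sup>2 / 4 * min (measure ?\<mu> {..c + 1}) (measure ?\<mu> {c + 2..})"
  define C2 where "C2 = real (d + 1) * law_variance + 1"
  have "0 < q" unfolding q_def min_less_iff_conj
    using c(2) by (intro conjI pos[of c] pos[of "c + 2 + (c + 1)"]) auto
  moreover have "0 < min (measure ?\<mu> {..c + 1}) (measure ?\<mu> {c + 2..})"
    unfolding min_less_iff_conj by (intro conjI pos[of c] pos[of "c + 2"]) auto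
  ultimately have "0 < C1" unfolding C1_def by simp
  moreover have "0 < C2"
    unfolding C2_def law_variance_def by (intro add_nonneg_pos mult_nonneg_nonneg variance_of_nonneg) simp_all
  moreover have "C1 * real n ^ d \<le> variance_of (weight_field p n d) (ground_energy n d)" if "n \<ge> 3" for n
    using variance_ground_energy_ge[of n "c + 1" "c + 2" q "c + 1"] that \<open>0 < q\<close>
    unfolding weight_field_def C1_def q_def by simp
  moreover have "variance_of (weight_field p n d) (ground_energy n d) \<le> C2 * real n ^ d" for n
    unfolding weight_field_def C2_def by (rule order_trans[OF variance_ground_energy_le mult_right_mono]) simp_all
  ultimately show ?thesis by blast
qed

end
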